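(* Let $f:\{0,1\}^n\to\{0,1\}^m$ be a Boolean function which is either constant or balanced, and suppose $\mathbf{0}\in f(\{0,1\}^n)$. For each $i=0,\dots,m-1$ run the algorithm $\mathrm{GPK}(\mathbf{e}_i)$ and let $\delta_i\in\{0,1\}^n$ be its output. If $f$ is constant, then with certainty $\delta_i=\mathbf{0}$ for all $i$; if $f$ is balanced, then with certainty $\delta_i\neq\mathbf{0}$ for at least one $i$. Consequently, deciding "constant" if all $\delta_i=\mathbf{0}$ and "balanced" otherwise is always correct.
   Context: A function $f:\{0,1\}^n\to\{0,1\}^m$ is constant if $f(\mathbf{x})$ is the same for all $\mathbf{x}$, and balanced if it takes exactly two distinct values, each on exactly half of the inputs. Bits are indexed from the right starting at $0$ and $\mathbf{e}_i=0^{m-1-i}\,1\,0^{i}\in\{0,1\}^m$. For strings $\mathbf{y},\mathbf{z}$ of equal length, $\mathbf{y}\oplus\mathbf{z}$ is bitwise XOR and $\mathbf{y}\cdot\mathbf{z}=\bigoplus_j y_jz_j$. $\mathbf{U}_f$ is the unitary with $\mathbf{U}_f(\ket{\mathbf{x}}_n\otimes\ket{\mathbf{z}}_m)=\ket{\mathbf{x}}_n\otimes\ket{\mathbf{z}\oplus f(\mathbf{x})}_m$; $\mathbf{H}_k=\mathbf{H}^{\otimes k}$ with $\mathbf{H}$ the one-qubit Hadamard gate. The algorithm $\mathrm{GPK}(\mathbf{y})$ for $\mathbf{y}\in\{0,1\}^m$: start in $\ket{\mathbf{0}}_n\otimes\ket{\mathbf{0}}_m$; apply Pauli $\mathbf{X}$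 gates to get $\ket{\mathbf{0}}_n\otimes\ket{\mathbf{y}}_m$; apply $\mathbf{H}_{n+m}$; apply $\mathbf{U}_f$; apply $\mathbf{H}_n$ to the first register; measure the first register in the computational basis, giving the output in $\{0,1\}^n$. *)

theory Defs
  imports Complex_Main
begin

text \<open>A bit string of length k is encoded as a natural number below 2^k;
bit i (indexed from the right, starting at 0) is bit b i. A function
f : {0,1}^n -> {0,1}^m is a function nat => nat with f x < 2^m for x < 2^n.
An (n+m)-qubit state is a function nat => complex giving the amplitude of each
computational basis state b < 2^(n+m); the basis state |x>_n (x) |z>_m is
b = x * 2^m + z, i.e. the first register occupies the high n qubits
(qubits m .. m+n-1) and the second register the low m qubits (0 .. m-1).\<close>

definition is_constant :: "nat \<Rightarrow> (nat \<Rightarrow> nat) \<Rightarrow> bool" where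
  "is_constant n f \<longleftrightarrow> (\<exists>c. \<forall>x<2^n. f x = c)"

definition is_balanced :: "nat \<Rightarrow> (nat \<Rightarrow> nat) \<Rightarrow> bool" where
  "is_balanced n f \<longleftrightarrow> (\<exists>a b. a \<noteq> b \<and> f ` {..<2^n} = {a, b}
      \<and> 2 * card {x. x < 2^n \<and> f x = a} = 2^n
      \<and> 2 * card {x. x < 2^n \<and> f x = b} = 2^n)"

definition unit_vec :: "nat \<Rightarrow> nat" where
  "unit_vec i = 2 ^ i"

definition ket0 :: "nat \<Rightarrow> complex" where
  "ket0 b = (if b = 0 then 1 else 0)"

definition X_gate :: "nat \<Rightarrow> (nat \<Rightarrow> complex) \<Rightarrow> (nat \<Rightarrow> complex)" where
  "X_gate j \<psi> = (\<lambda>b. \<psi> (flip_bit j b))"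

definition H_gate :: "nat \<Rightarrow> (nat \<Rightarrow> complex) \<Rightarrow> (nat \<Rightarrow> complex)" where
  "H_gate j \<psi> = (\<lambda>b. (\<psi> (unset_bit j b) + (if bit b j then -1 else 1) * \<psi> (set_bit j b))
                      / complex_of_real (sqrt 2))"

definition apply_each :: "(nat \<Rightarrow> (nat \<Rightarrow> complex) \<Rightarrow> (nat \<Rightarrow> complex)) \<Rightarrow> nat list
    \<Rightarrow> (nat \<Rightarrow> complex) \<Rightarrow> (nat \<Rightarrow> complex)" where
  "apply_each G js \<psi> = fold G js \<psi>"

text \<open>U_f (|x>_n (x) |z>_m) = |x>_n (x) |z xor f(x)>_m\<close>
definition U_f :: "nat \<Rightarrow> nat \<Rightarrow> (nat \<Rightarrow> nat) \<Rightarrow> (nat \<Rightarrow> complex) \<Rightarrow> (nat \<Rightarrow> complex)" where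
  "U_f n m f \<psi> = (\<lambda>b. if b < 2^(n+m)
      then \<psi> (drop_bit m b * 2^m + xor (take_bit m b) (f (drop_bit m b)))
      else \<psi> b)"

definition GPK_state :: "nat \<Rightarrow> nat \<Rightarrow> (nat \<Rightarrow> nat) \<Rightarrow> nat \<Rightarrow> (nat \<Rightarrow> complex)" where
  "GPK_state n m f y =
     (let \<psi>1 = apply_each X_gate (filter (\<lambda>j. bit y j) [0..<m]) ket0;
          \<psi>2 = apply_each H_gate [0..<n+m] \<psi>1;
          \<psi>3 = U_f n m f \<psi>2;
          \<psi>4 = apply_each H_gate [m..<m+n] \<psi>3
      in \<psi>4)"

definition GPK_prob :: "nat \<Rightarrow> nat \<Rightarrow> (nat \<Rightarrow> nat) \<Rightarrow> nat \<Rightarrow> nat \<Rightarrow> real" where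
  "GPK_prob n m f y d = (\<Sum>z<2^m. (cmod (GPK_state n m f y (d * 2^m + z)))\<^sup>2)"

end

theory Submission
  imports Defs
begin

text \<open>
  Write \<open>y \<cdot> z\<close> for the inner product of bit strings modulo 2. Run on \<open>|0\<rangle>|y\<rangle>\<close>, the
  first Hadamard layer produces the phases \<open>(-1)^(z \<cdot> y)\<close> on the second register, and
  \<open>U_f\<close> kicks the phase \<open>(-1)^(f(x) \<cdot> y)\<close> back onto the first one. After the last
  Hadamard layer, outcome \<open>d\<close> therefore has probability
  \<open>|\<Sum>\<^sub>x (-1)^(d \<cdot> x + f(x) \<cdot> y)|^2 / 4^n\<close>. For \<open>y = e\<^sub>i\<close> and \<open>d = 0\<close> the sum is
  \<open>\<Sum>\<^sub>x (-1)^(f(x)\<^sub>i)\<close>. Since \<open>0\<close> is a value of \<open>f\<close>, a constant \<open>f\<close> is identically \<open>0\<close> and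
  every sum is \<open>2^n\<close>. A balanced \<open>f\<close> takes the values \<open>0\<close> and some \<open>v \<noteq> 0\<close> equally often,
  so the sum vanishes for any bit \<open>i\<close> of \<open>v\<close>.
\<close>

lemma sum_lessThan_add:
  "(\<Sum>i<m + n. f i) = (\<Sum>i<m. f i) + (\<Sum>i<n. f (m + i :: nat))"
  by (induction n) (simp_all add: add.assoc)

lemma bit_imp_less_if_less_exp: "(b::nat) < 2^m \<Longrightarrow> bit b j \<Longrightarrow> j < m"
  by (metis bit_take_bit_iff take_bit_nat_eq_self_iff)

lemma drop_bit_less_exp_iff: "drop_bit m (b::nat) < 2^n \<longleftrightarrow> b < 2^(n + m)"
  by (simp add: drop_bit_eq_div div_less_iff_less_mult power_add)

lemma drop_bit_unset_bit_same: "drop_bit k (unset_bit k (b::nat)) = 2 * drop_bit (Suc k) b"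
  by (rule bit_eqI) (auto simp: bit_drop_bit_eq bit_unset_bit_iff bit_double_iff elim: not0_implies_Suc)

lemma drop_bit_set_bit_same: "drop_bit k (set_bit k (b::nat)) = 2 * drop_bit (Suc k) b + 1"
proof -
  have "drop_bit k (set_bit k b) = set_bit 0 (drop_bit k (unset_bit k b))"
    by (rule bit_eqI) (auto simp: bit_drop_bit_eq bit_unset_bit_iff bit_set_bit_iff)
  then show ?thesis
    by (simp add: drop_bit_unset_bit_same set_bit_0)
qed

lemma flip_bit_flip_bit [simp]: "flip_bit j (flip_bit j (a::nat)) = a"
  by (rule bit_eqI) (auto simp: bit_flip_bit_iff)

lemma bit_fold_flip_bit:
  "distinct js \<Longrightarrow> bit (fold flip_bit js (a::nat)) j \<longleftrightarrow> bit a j \<noteq> (j \<in> set js)"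
  by (induction js arbitrary: a) (auto simp: bit_flip_bit_iff)

definition dot_sign :: "nat \<Rightarrow> nat \<Rightarrow> nat \<Rightarrow> complex" where
  "dot_sign k a b = (\<Prod>j<k. if bit a j \<and> bit b j then -1 else 1)"

definition basis_state :: "nat \<Rightarrow> nat \<Rightarrow> complex" where
  "basis_state y = (\<lambda>b. if b = y then 1 else 0)"

definition tensor_state :: "nat \<Rightarrow> (nat \<Rightarrow> complex) \<Rightarrow> (nat \<Rightarrow> complex) \<Rightarrow> nat \<Rightarrow> complex" where
  "tensor_state m g h = (\<lambda>b. g (drop_bit m b) * h (take_bit m b))"

lemma dot_sign_Suc:
  "dot_sign (Suc k) a b = dot_sign k a b * (if bit a k \<and> bit b k then -1 else 1)"
  by (simp add: dot_sign_def)

lemma dot_sign_take_bit_left [simp]: "dot_sign k (take_bit k a) b = dot_sign k a b"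
  unfolding dot_sign_def by (rule prod.cong) (simp_all add: bit_take_bit_iff)

lemma dot_sign_take_bit_right [simp]: "dot_sign k a (take_bit k b) = dot_sign k a b"
  unfolding dot_sign_def by (rule prod.cong) (simp_all add: bit_take_bit_iff)

lemma dot_sign_0_left [simp]: "dot_sign k 0 b = 1"
  by (simp add: dot_sign_def)

lemma dot_sign_xor_left:
  "dot_sign k (xor a a') b = dot_sign k a b * dot_sign k a' b"
  unfolding dot_sign_def prod.distrib[symmetric] by (rule prod.cong) (auto simp: bit_xor_iff)

lemma dot_sign_eq_if_less:
  assumes "m \<le> k" "b < 2 ^ m"
  shows "dot_sign k a b = dot_sign m a b"
proof -
  have "\<not> bit b j" if "m \<le> j" for j
    using assms(2) that bit_imp_less_if_less_exp by fastforce
  then show ?thesis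
    unfolding dot_sign_def using assms(1)
    by (intro prod.mono_neutral_right) auto
qed

lemma dot_sign_exp_right:
  assumes "i < k"
  shows "dot_sign k a (2 ^ i) = (if bit a i then -1 else 1)"
proof -
  have "dot_sign k a (2 ^ i) = (\<Prod>j<k. if j = i then (if bit a i then -1 else 1) else 1)"
    unfolding dot_sign_def by (rule prod.cong) (auto simp: bit_exp_iff)
  then show ?thesis
    using assms by simp
qed

lemma norm_dot_sign [simp]: "norm (dot_sign k a b) = 1"
  unfolding dot_sign_def prod_norm[symmetric] by (rule prod.neutral) simp

lemma hadamard_transform:
  "fold H_gate [0..<k] g b =
     (\<Sum>c<2^k. dot_sign k b c * g (drop_bit k b * 2^k + c)) / complex_of_real (sqrt 2) ^ k"
proof (induction k arbitrary: b)
  case 0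
  then show ?case by (simp add: dot_sign_def)
next
  case (Suc k)
  let ?r = "complex_of_real (sqrt 2)"
  define q where "q = drop_bit (Suc k) b * 2 ^ Suc k"
  define s where "s = (if bit b k then -1 else 1 :: complex)"
  define F where "F t = (\<Sum>c<2^k. dot_sign k b c * g (q + t + c))" for t
  have sign_unset: "dot_sign k (unset_bit k b) c = dot_sign k b c" for c
    by (metis dot_sign_take_bit_left order_refl take_bit_unset_bit_eq)
  have sign_set: "dot_sign k (set_bit k b) c = dot_sign k b c" for c
    by (metis dot_sign_take_bit_left order_refl take_bit_set_bit_eq)
  have low_half: "fold H_gate [0..<k] g (unset_bit k b) = F 0 / ?r ^ k"
    by (simp add: Suc.IH F_def sign_unset drop_bit_unset_bit_same q_def ac_simps)
  have high_half: "fold H_gate [0..<k] g (set_bit k b) = F (2^k) / ?r ^ k"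
    by (simp add: Suc.IH F_def sign_set drop_bit_set_bit_same q_def algebra_simps)
  have "fold H_gate [0..<Suc k] g b =
      (fold H_gate [0..<k] g (unset_bit k b) + s * fold H_gate [0..<k] g (set_bit k b)) / ?r"
    by (simp add: H_gate_def s_def)
  also have "\<dots> = (F 0 + s * F (2^k)) / ?r ^ Suc k"
    unfolding low_half high_half by (simp add: field_simps)
  also have "F 0 + s * F (2^k) = (\<Sum>c<2^Suc k. dot_sign (Suc k) b c * g (q + c))"
  proof -
    have low: "dot_sign (Suc k) b c = dot_sign k b c" if "c < 2^k" for c
    proof -
      have "\<not> bit c k"
        using that bit_imp_less_if_less_exp by blast
      then show ?thesis
        by (simp add: dot_sign_Suc)
    qed
    have high: "dot_sign (Suc k) b (2^k + c) = s * dot_sign k b c" if "c < 2^k" for c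
    proof -
      have "take_bit k (2^k + c) = c"
        using that by (simp add: take_bit_eq_mod)
      then have "dot_sign k b (2^k + c) = dot_sign k b c"
        by (metis dot_sign_take_bit_right)
      moreover have "bit (2^k + c) k"
        using that by (simp add: bit_iff_odd_drop_bit drop_bit_eq_div div_add_self1 div_less)
      ultimately show ?thesis
        by (simp add: dot_sign_Suc s_def)
    qed
    have "(\<Sum>c<2^k. dot_sign (Suc k) b c * g (q + c)) = F 0"
      unfolding F_def by (rule sum.cong) (simp_all add: low)
    moreover have "(\<Sum>c<2^k. dot_sign (Suc k) b (2^k + c) * g (q + (2^k + c))) = s * F (2^k)"
      unfolding F_def sum_distrib_left by (rule sum.cong) (simp_all add: high add.assoc)
    ultimately show ?thesis
      unfolding power_Suc mult_2 sum_lessThan_add by simp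
  qed
  finally show ?case
    by (simp add: q_def)
qed

lemma hadamard_basis_state:
  assumes "y < 2^k"
  shows "fold H_gate [0..<k] (basis_state y) b =
    (if b < 2^k then dot_sign k b y / complex_of_real (sqrt 2) ^ k else 0)"
proof -
  have hit: "drop_bit k b * 2^k + c = y \<longleftrightarrow> b < 2^k \<and> c = y" if "c < 2^k" for c
  proof -
    have "drop_bit k b * 2^k + c = y \<Longrightarrow> drop_bit k b = 0"
      using assms by (cases "drop_bit k b") auto
    then show ?thesis
      by (auto simp: drop_bit_eq_div div_eq_0_iff)
  qed
  have "(\<Sum>c<2^k. dot_sign k b c * basis_state y (drop_bit k b * 2^k + c)) =
      (\<Sum>c<2^k. if b < 2^k \<and> c = y then dot_sign k b y else 0)"
    by (rule sum.cong) (auto simp: basis_state_def hit)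
  then show ?thesis
    using assms by (simp add: hadamard_transform)
qed

lemma X_gate_basis_state: "X_gate j (basis_state a) = basis_state (flip_bit j a)"
proof -
  have "flip_bit j b = a \<longleftrightarrow> b = flip_bit j a" for b
    using flip_bit_flip_bit by metis
  then show ?thesis
    by (simp add: X_gate_def basis_state_def)
qed

lemma fold_X_gate_basis_state: "fold X_gate js (basis_state a) = basis_state (fold flip_bit js a)"
  by (induction js arbitrary: a) (simp_all add: X_gate_basis_state)

lemma prepare_basis_state:
  assumes "y < 2^m"
  shows "apply_each X_gate (filter (bit y) [0..<m]) ket0 = basis_state y"
proof -
  have "j < m" if "bit y j" for j
    using assms that by (rule bit_imp_less_if_less_exp)
  then have flips: "fold flip_bit (filter (bit y) [0..<m]) 0 = y"
    by (intro bit_eqI) (auto simp: bit_fold_flip_bit)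
  have ket0: "ket0 = basis_state 0"
    by (simp add: ket0_def basis_state_def fun_eq_iff)
  show ?thesis
    by (simp only: apply_each_def ket0 fold_X_gate_basis_state flips)
qed

lemma H_gate_tensor_state:
  "H_gate (j + m) (tensor_state m g h) = tensor_state m (H_gate j g) h"
proof -
  have "drop_bit m (unset_bit (j + m) b) = unset_bit j (drop_bit m b)"
    "drop_bit m (set_bit (j + m) b) = set_bit j (drop_bit m b)"
    "take_bit m (unset_bit (j + m) b) = take_bit m b"
    "take_bit m (set_bit (j + m) b) = take_bit m b" for b :: nat
    by (auto intro!: bit_eqI simp: bit_drop_bit_eq bit_take_bit_iff bit_unset_bit_iff bit_set_bit_iff)
  then show ?thesis
    unfolding H_gate_def tensor_state_def
    by (simp add: bit_drop_bit_eq add_divide_distrib distrib_right mult.assoc add.commute)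
qed

lemma fold_H_gate_tensor_state:
  "fold H_gate [m..<m + n] (tensor_state m g h) = tensor_state m (fold H_gate [0..<n] g) h"
proof -
  have "fold H_gate (map (\<lambda>i. i + m) js) (tensor_state m g h) = tensor_state m (fold H_gate js g) h"
    for js
    by (induction js arbitrary: g) (simp_all add: H_gate_tensor_state)
  moreover have "[m..<m + n] = map (\<lambda>i. i + m) [0..<n]"
    by (simp add: map_add_upt add.commute)
  ultimately show ?thesis
    by simp
qed

text \<open>The kickback rests on \<open>(z \<oplus> f x) \<cdot> y = z \<cdot> y + f x \<cdot> y\<close>.\<close>

lemma U_f_phase_kickback:
  assumes range: "\<forall>x<2^n. f x < 2^m"
  shows "U_f n m f (\<lambda>b. if b < 2^(n + m) then c * dot_sign m b y else 0) =
    tensor_state m (\<lambda>x. if x < 2^n then dot_sign m (f x) y else 0) (\<lambda>z. c * dot_sign m z y)"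
proof (rule ext)
  fix b :: nat
  define x where "x = drop_bit m b"
  define w where "w = xor (take_bit m b) (f x)"
  show "U_f n m f (\<lambda>b. if b < 2^(n + m) then c * dot_sign m b y else 0) b =
    tensor_state m (\<lambda>x. if x < 2^n then dot_sign m (f x) y else 0) (\<lambda>z. c * dot_sign m z y) b"
  proof (cases "b < 2^(n + m)")
    case True
    then have x_less: "x < 2^n"
      by (simp add: x_def drop_bit_less_exp_iff)
    have "take_bit m (f x) = f x"
      using range x_less by (simp add: take_bit_nat_eq_self_iff)
    then have w_eq: "w = take_bit m (xor b (f x))"
      unfolding w_def by (metis take_bit_xor)
    have w_less: "w < 2^m"
      unfolding w_eq by (rule take_bit_nat_less_exp)
    have "x * 2^m + w < 2^(n + m)"
    proof -
      have "x * 2^m + w < (x + 1) * 2^m"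
        using w_less by simp
      also have "\<dots> \<le> 2^n * 2^m"
        using x_less by (intro mult_right_mono) simp_all
      finally show ?thesis
        by (simp add: power_add)
    qed
    moreover have "dot_sign m (x * 2^m + w) y = dot_sign m b y * dot_sign m (f x) y"
    proof -
      have "take_bit m (x * 2^m + w) = w"
        using w_less by (simp add: take_bit_eq_mod)
      then show ?thesis
        by (metis dot_sign_take_bit_left dot_sign_xor_left w_def)
    qed
    ultimately show ?thesis
      using True x_less by (simp add: U_f_def tensor_state_def x_def w_def)
  next
    case False
    then show ?thesis
      by (simp add: U_f_def tensor_state_def drop_bit_less_exp_iff)
  qed
qed

lemma GPK_state_eq:
  assumes range: "\<forall>x<2^n. f x < 2^m" and y_less: "y < 2^m"
  shows "GPK_state n m f y =
    tensor_state m (fold H_gate [0..<n] (\<lambda>x. if x < 2^n then dot_sign m (f x) y else 0))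
      (\<lambda>z. dot_sign m z y / complex_of_real (sqrt 2) ^ (n + m))"
proof -
  let ?c = "1 / complex_of_real (sqrt 2) ^ (n + m)"
  have "(2::nat)^m \<le> 2^(n + m)"
    by (rule power_increasing) simp_all
  with y_less have "y < 2^(n + m)"
    by (rule order_less_le_trans)
  then have "fold H_gate [0..<n + m] (basis_state y) =
      (\<lambda>b. if b < 2^(n + m) then ?c * dot_sign m b y else 0)"
    using y_less by (simp add: hadamard_basis_state dot_sign_eq_if_less fun_eq_iff)
  then show ?thesis
    unfolding GPK_state_def Let_def prepare_basis_state[OF y_less]
    by (simp add: apply_each_def U_f_phase_kickback[OF range] fold_H_gate_tensor_state)
qed

lemma GPK_prob_eq:
  assumes range: "\<forall>x<2^n. f x < 2^m" and y_less: "y < 2^m" and d_less: "d < 2^n"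
  shows "GPK_prob n m f y d = (cmod (\<Sum>x<2^n. dot_sign n d x * dot_sign m (f x) y))^2 / 4^n"
proof -
  let ?S = "cmod (\<Sum>x<2^n. dot_sign n d x * dot_sign m (f x) y)"
  let ?g = "\<lambda>x. if x < 2^n then dot_sign m (f x) y else 0"
  have "fold H_gate [0..<n] ?g d =
      (\<Sum>x<2^n. dot_sign n d x * dot_sign m (f x) y) / complex_of_real (sqrt 2) ^ n"
  proof -
    have d0: "drop_bit n d = 0"
      using d_less by (simp add: drop_bit_eq_div)
    have "(\<Sum>x<2^n. dot_sign n d x * ?g (0 * 2^n + x)) =
        (\<Sum>x<2^n. dot_sign n d x * dot_sign m (f x) y)"
      by (rule sum.cong) simp_all
    then show ?thesis
      unfolding hadamard_transform d0 by simp
  qed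
  moreover have "GPK_state n m f y (d * 2^m + z) =
      fold H_gate [0..<n] ?g d * (dot_sign m z y / complex_of_real (sqrt 2) ^ (n + m))"
    if "z < 2^m" for z
  proof -
    have "drop_bit m (d * 2^m + z) = d" "take_bit m (d * 2^m + z) = z"
      using that by (simp_all add: drop_bit_eq_div take_bit_eq_mod)
    then show ?thesis
      by (simp only: GPK_state_eq[OF range y_less] tensor_state_def)
  qed
  ultimately have amplitude: "cmod (GPK_state n m f y (d * 2^m + z)) = ?S / sqrt 2 ^ n / sqrt 2 ^ (n + m)"
    if "z < 2^m" for z
    using that by (simp add: norm_mult norm_divide norm_power)
  have sqrt2_power_sq: "(sqrt 2 ^ k)^2 = (2::real)^k" for k
    by (simp add: power_even_eq[symmetric] power_mult)
  have "GPK_prob n m f y d = (\<Sum>z<(2::nat)^m. ?S^2 / 2^n / 2^(n + m))"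
    unfolding GPK_prob_def
    by (rule sum.cong) (simp_all add: amplitude power_divide power_mult_distrib sqrt2_power_sq)
  also have "\<dots> = ?S^2 / 4^n"
    by (simp add: power_add field_simps flip: power_mult_distrib)
  finally show ?thesis .
qed

lemma GPK_prob_unit_vec:
  assumes range: "\<forall>x<2^n. f x < 2^m" and "i < m"
  shows "GPK_prob n m f (unit_vec i) 0 =
    (cmod (\<Sum>x<2^n. if bit (f x) i then -1 else 1))^2 / 4^n"
proof -
  have "unit_vec i < 2^m"
    using \<open>i < m\<close> by (simp add: unit_vec_def)
  then show ?thesis
    using assms by (simp add: GPK_prob_eq unit_vec_def dot_sign_exp_right)
qed

lemma balanced_fiber_card:
  assumes "is_balanced n f" and "c \<in> f ` {..<2^n}"
  shows "2 * card {x. x < 2^n \<and> f x = c} = 2^n"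
proof -
  obtain a b where "f ` {..<2^n} = {a, b}"
    and "2 * card {x. x < 2^n \<and> f x = a} = 2^n" "2 * card {x. x < 2^n \<and> f x = b} = 2^n"
    using assms(1) unfolding is_balanced_def by blast
  with assms(2) show ?thesis
    by auto
qed

lemma balanced_sum_eq_0:
  fixes \<phi> :: "nat \<Rightarrow> 'a::comm_ring_1"
  assumes balanced: "is_balanced n f" and image: "f ` {..<2^n} = {a, b}" and "a \<noteq> b"
    and antisymmetric: "\<phi> b = - \<phi> a"
  shows "(\<Sum>x<2^n. \<phi> (f x)) = 0"
proof -
  let ?A = "{x. x < 2^n \<and> f x = a}" and ?B = "{x. x < 2^n \<and> f x = b}"
  have "{..<2^n} = ?A \<union> ?B" and "?A \<inter> ?B = {}"
    using image \<open>a \<noteq> b\<close> by auto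
  then have "(\<Sum>x<2^n. \<phi> (f x)) = (\<Sum>x\<in>?A. \<phi> (f x)) + (\<Sum>x\<in>?B. \<phi> (f x))"
    by (simp add: sum.union_disjoint)
  also have "\<dots> = of_nat (card ?A) * \<phi> a + of_nat (card ?B) * \<phi> b"
    by simp
  also have "card ?A = card ?B"
    using balanced_fiber_card[OF balanced, of a] balanced_fiber_card[OF balanced, of b] image
    by simp
  finally show ?thesis
    by (simp add: antisymmetric)
qed

lemma GPK_prob_unit_vec_zero_function:
  assumes "\<forall>x<2^n. f x = 0" and "i < m"
  shows "GPK_prob n m f (unit_vec i) 0 = 1"
proof -
  have "(\<Sum>x<2^n. if bit (f x) i then -1 else 1) = (\<Sum>x<(2::nat)^n. 1::complex)"
    using assms(1) by (intro sum.cong) simp_all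
  moreover have "(cmod ((2::complex)^n))^2 = 4^n"
    by (simp add: norm_power power_even_eq[symmetric] power_mult)
  ultimately show ?thesis
    using assms by (simp add: GPK_prob_unit_vec)
qed

lemma GPK_prob_unit_vec_balanced:
  assumes range: "\<forall>x<2^n. f x < 2^m" and balanced: "is_balanced n f"
    and image: "f ` {..<2^n} = {0, v}" and "v \<noteq> 0" and "bit v i"
  shows "i < m" and "GPK_prob n m f (unit_vec i) 0 = 0"
proof -
  have "v \<in> f ` {..<2^n}"
    using image by simp
  with range have "v < 2^m"
    by auto
  then show "i < m"
    using \<open>bit v i\<close> by (rule bit_imp_less_if_less_exp)
  have "(\<Sum>x<2^n. if bit (f x) i then -1 else 1) = (0::complex)"
    using \<open>bit v i\<close>
    by (intro balanced_sum_eq_0[OF balanced image \<open>v \<noteq> 0\<close>[symmetric]]) simp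
  with range \<open>i < m\<close> show "GPK_prob n m f (unit_vec i) 0 = 0"
    by (simp add: GPK_prob_unit_vec)
qed

theorem theorem3p3:
  fixes n m :: nat and f :: "nat \<Rightarrow> nat"
  assumes range: "\<forall>x<2^n. f x < 2^m"
    and cb: "is_constant n f \<or> is_balanced n f"
    and zero: "0 \<in> f ` {..<2^n}"
  shows "(is_constant n f \<longrightarrow> (\<forall>i<m. GPK_prob n m f (unit_vec i) 0 = 1))
       \<and> (is_balanced n f \<longrightarrow> (\<Prod>i<m. GPK_prob n m f (unit_vec i) 0) = 0)"
proof (intro conjI impI)
  assume "is_constant n f"
  with zero have "\<forall>x<2^n. f x = 0"
    unfolding is_constant_def by force
  then show "\<forall>i<m. GPK_prob n m f (unit_vec i) 0 = 1"
    by (simp add: GPK_prob_unit_vec_zero_function)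
next
  assume balanced: "is_balanced n f"
  with zero obtain v where image: "f ` {..<2^n} = {0, v}" and "v \<noteq> 0"
    unfolding is_balanced_def by (metis insert_commute insertE singletonD)
  have "\<exists>i. bit v i"
    using \<open>v \<noteq> 0\<close> bit_eq_iff[of v 0] by simp
  then obtain i where "bit v i" ..
  with GPK_prob_unit_vec_balanced[OF range balanced image \<open>v \<noteq> 0\<close>]
  show "(\<Prod>i<m. GPK_prob n m f (unit_vec i) 0) = 0"
    by (intro prod_zero) auto
qed

end
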